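(* Every generic quadrangle $P$ in $\mathbb{R}^3$ is regular. Moreover, for every support system $u_1,u_2,u_3,u_4$ of $P$, the derived quadrangle $P'=B_1B_2B_3B_4$ is a plane quadrangle (its four vertices are coplanar) with oriented area $0$; in particular it is self-intersecting.
   Context: For a closed polygon $P=A_1\ldots A_n$ in $\mathbb{R}^3$ put $v_1=\overline{A_1A_2},\ldots,v_n=\overline{A_nA_1}$, indices cyclic mod $n$. $P$ is generic if any two consecutive $v_i,v_{i+1}$ are not collinear and any three consecutive $v_i,v_{i+1},v_{i+2}$ are not coplanar. A support system of $P$ is a tuple $u_1,\ldots,u_n$ with $[u_i,u_{i+1}]=v_{i+1}$ for all $i$ (cyclically; $[\cdot,\cdot]$ is the cross product). A generic polygon is regular if it has a support system. Given a support system, fix an origin $O$ and let $B_i$ be the point with $\overline{OB_i}=u_i$; the polygon $P'=B_1\ldots B_n$ (edge vectors $u_2-u_1,\ldots,u_1-u_n$) is called the derived polygon (a derivative) of $P$. A closed polygon $B_1\ldots B_n$ has oriented area $0$ if $\sum_{i=1}^n[\overline{OB_i},\overline{OB_{i+1}}]=0$ (a quantity independent of $O$); for a plane polygon this means its signed area in its plane is zero. *)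

theory Defs
  imports "HOL-Analysis.Analysis"
begin

text \<open>A closed polygon with n vertices A 0, ..., A (n-1) (0-indexed, paper's A_1..A_n),
  indices cyclic mod n.  Edge vector v_i = A_{i+1} - A_i.\<close>

definition edge :: "nat \<Rightarrow> (nat \<Rightarrow> real^3) \<Rightarrow> nat \<Rightarrow> real^3" where
  "edge n A i = A (Suc i mod n) - A (i mod n)"

definition generic_polygon :: "nat \<Rightarrow> (nat \<Rightarrow> real^3) \<Rightarrow> bool" where
  "generic_polygon n A \<longleftrightarrow>
     (\<forall>i<n. \<not> collinear {0, edge n A i, edge n A (Suc i mod n)} \<and>
            \<not> coplanar {0, edge n A i, edge n A (Suc i mod n), edge n A (Suc (Suc i) mod n)})"

definition support_system :: "nat \<Rightarrow> (nat \<Rightarrow> real^3) \<Rightarrow> (nat \<Rightarrow> real^3) \<Rightarrow> bool" where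
  "support_system n A u \<longleftrightarrow>
     (\<forall>i<n. cross3 (u i) (u (Suc i mod n)) = edge n A (Suc i mod n))"

definition regular_polygon :: "nat \<Rightarrow> (nat \<Rightarrow> real^3) \<Rightarrow> bool" where
  "regular_polygon n A \<longleftrightarrow> generic_polygon n A \<and> (\<exists>u. support_system n A u)"

definition oriented_area_zero :: "nat \<Rightarrow> (nat \<Rightarrow> real^3) \<Rightarrow> bool" where
  "oriented_area_zero n B \<longleftrightarrow>
     (\<forall>Z. (\<Sum>i<n. cross3 (B i - Z) (B (Suc i mod n) - Z)) = 0)"

definition self_intersecting_quad :: "(nat \<Rightarrow> real^3) \<Rightarrow> bool" where
  "self_intersecting_quad B \<longleftrightarrow>
     closed_segment (B 0) (B 1) \<inter> closed_segment (B 2) (B 3) \<noteq> {} \<or>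
     closed_segment (B 1) (B 2) \<inter> closed_segment (B 3) (B 0) \<noteq> {}"

end

theory Submission
  imports Defs
begin

unbundle cross3_syntax

text \<open>
  A support vector \<open>u\<^sub>i\<close> is orthogonal to \<open>v\<^sub>i\<close> and \<open>v\<^sub>i\<^sub>+\<^sub>1\<close>, hence
  \<open>u\<^sub>i = t\<^sub>i (v\<^sub>i \<times> v\<^sub>i\<^sub>+\<^sub>1)\<close>. Since the edges of a quadrangle sum to zero, the triple
  products \<open>det(v\<^sub>i, v\<^sub>i\<^sub>+\<^sub>1, v\<^sub>i\<^sub>+\<^sub>2)\<close> are \<open>D, -D, D, -D\<close> with \<open>D \<noteq> 0\<close> by genericity, and
  the identity \<open>(a \<times> b) \<times> (b \<times> c) = det(a, b, c) b\<close> turns the support equations into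
  \<open>t\<^sub>i t\<^sub>i\<^sub>+\<^sub>1 (\<plusminus>D) = 1\<close>. These have solutions, and every solution has
  \<open>t\<^sub>2 = -t\<^sub>0\<close>, \<open>t\<^sub>3 = -t\<^sub>1\<close>. Together with
  \<open>v\<^sub>0 \<times> v\<^sub>1 + v\<^sub>2 \<times> v\<^sub>3 = v\<^sub>1 \<times> v\<^sub>2 + v\<^sub>3 \<times> v\<^sub>0\<close> this makes the diagonals
  \<open>u\<^sub>1 - u\<^sub>3\<close> and \<open>u\<^sub>0 - u\<^sub>2\<close> of the derived quadrangle parallel, so it is plane and two
  opposite sides cross. Its oriented area is \<open>\<Sum> u\<^sub>i \<times> u\<^sub>i\<^sub>+\<^sub>1 = \<Sum> v\<^sub>i = 0\<close>.
\<close>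

lemma cross_cross_shared:
  fixes a b c :: "real^3"
  shows "(a \<times> b) \<times> (b \<times> c) = (a \<bullet> (b \<times> c)) *\<^sub>R b"
  by (simp add: cross3_simps forall_3)

lemma cross_frame_decomposition:
  fixes a b c :: "real^3"
  shows "((a \<times> b) \<bullet> (a \<times> b)) *\<^sub>R c =
    ((c \<bullet> a) * (b \<bullet> b) - (c \<bullet> b) * (a \<bullet> b)) *\<^sub>R a +
    ((c \<bullet> b) * (a \<bullet> a) - (c \<bullet> a) * (a \<bullet> b)) *\<^sub>R b + (c \<bullet> (a \<times> b)) *\<^sub>R (a \<times> b)"
  by (simp add: cross3_simps forall_3)

lemma orthogonal_cross_imp_coplanar:
  fixes a b c :: "real^3"
  assumes "a \<times> b \<noteq> 0" "c \<bullet> (a \<times> b) = 0"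
  shows "coplanar {0, a, b, c}"
proof -
  define G where "G = (a \<times> b) \<bullet> (a \<times> b)"
  define \<alpha> where "\<alpha> = ((c \<bullet> a) * (b \<bullet> b) - (c \<bullet> b) * (a \<bullet> b)) / G"
  define \<beta> where "\<beta> = ((c \<bullet> b) * (a \<bullet> a) - (c \<bullet> a) * (a \<bullet> b)) / G"
  have "G \<noteq> 0"
    using assms(1) by (simp add: G_def)
  then have "G *\<^sub>R c = G *\<^sub>R (\<alpha> *\<^sub>R a + \<beta> *\<^sub>R b)"
    using cross_frame_decomposition[of a b c] assms(2)
    by (simp add: G_def \<alpha>_def \<beta>_def scaleR_add_right)
  with \<open>G \<noteq> 0\<close> have c: "c = \<alpha> *\<^sub>R a + \<beta> *\<^sub>R b"
    by simp
  have "c \<in> affine hull {0, a, b}"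
    unfolding affine_hull_3
    by (intro CollectI exI[of _ "1 - \<alpha> - \<beta>"] exI[of _ \<alpha>] exI[of _ \<beta>]) (simp add: c)
  then have "{0, a, b, c} \<subseteq> affine hull {0, a, b}"
    by (simp add: hull_inc)
  then show ?thesis
    unfolding coplanar_def by blast
qed

lemma orthogonal_imp_parallel_cross:
  fixes a b u :: "real^3"
  assumes "a \<times> b \<noteq> 0" "u \<bullet> a = 0" "u \<bullet> b = 0"
  shows "\<exists>t. u = t *\<^sub>R (a \<times> b)"
proof -
  define G where "G = (a \<times> b) \<bullet> (a \<times> b)"
  have "G \<noteq> 0"
    using assms(1) by (simp add: G_def)
  have "G *\<^sub>R u = (u \<bullet> (a \<times> b)) *\<^sub>R (a \<times> b)"
    using cross_frame_decomposition[of a b u] assms(2,3) by (simp add: G_def)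
  then have "u = (1 / G) *\<^sub>R ((u \<bullet> (a \<times> b)) *\<^sub>R (a \<times> b))"
    using \<open>G \<noteq> 0\<close> by (metis scaleR_scaleR divide_self_if times_divide_eq_left mult_1 scaleR_one)
  then show ?thesis
    by auto
qed

lemma scaled_cross_cross_eq_self:
  fixes a b c :: "real^3"
  assumes "(s *\<^sub>R (a \<times> b)) \<times> (t *\<^sub>R (b \<times> c)) = b" "b \<noteq> 0"
  shows "s * t * (a \<bullet> (b \<times> c)) = 1"
proof -
  have "(s * t * (a \<bullet> (b \<times> c))) *\<^sub>R b = 1 *\<^sub>R b"
    using assms(1) by (simp add: cross_mult_left cross_mult_right cross_cross_shared mult_ac)
  with assms(2) show ?thesis
    using scaleR_cancel_right by blast
qed

lemma closed_segments_meet: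
  fixes x y z w :: "'a::real_vector"
  assumes "k \<ge> 0" "x + k *\<^sub>R y = z + k *\<^sub>R w"
  shows "closed_segment x y \<inter> closed_segment z w \<noteq> {}"
proof -
  have \<theta>: "0 \<le> k / (1 + k)" "k / (1 + k) \<le> 1" "1 - k / (1 + k) = 1 / (1 + k)"
    using assms(1) by (auto simp: field_simps)
  have "(1 - k / (1 + k)) *\<^sub>R x + (k / (1 + k)) *\<^sub>R y = (1 / (1 + k)) *\<^sub>R (x + k *\<^sub>R y)"
    by (simp add: \<theta>(3) scaleR_add_right)
  also have "\<dots> = (1 - k / (1 + k)) *\<^sub>R z + (k / (1 + k)) *\<^sub>R w"
    by (simp add: assms(2) \<theta>(3) scaleR_add_right)
  finally show ?thesis
    using \<theta>(1,2) unfolding closed_segment_def by blast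
qed

lemma parallel_diagonals_coplanar:
  fixes p :: "nat \<Rightarrow> 'a::real_vector"
  assumes "p 1 - p 3 = k *\<^sub>R (p 0 - p 2)"
  shows "coplanar {p 0, p 1, p 2, p 3}"
proof -
  have p3: "p 3 = (- k) *\<^sub>R p 0 + p 1 + k *\<^sub>R p 2"
    using assms by (simp add: algebra_simps)
  have "p 3 \<in> affine hull {p 0, p 1, p 2}"
    unfolding affine_hull_3
    by (intro CollectI exI[of _ "- k"] exI[of _ 1] exI[of _ k]) (simp add: p3)
  then have "{p 0, p 1, p 2, p 3} \<subseteq> affine hull {p 0, p 1, p 2}"
    by (simp add: hull_inc)
  then show ?thesis
    unfolding coplanar_def by blast
qed

lemma parallel_diagonals_self_intersecting:
  fixes p :: "nat \<Rightarrow> real^3"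
  assumes "p 1 - p 3 = k *\<^sub>R (p 0 - p 2)"
  shows "self_intersecting_quad p"
proof (cases "k \<ge> 0")
  case True
  have "p 1 + k *\<^sub>R p 2 = p 3 + k *\<^sub>R p 0"
    using assms by (simp add: algebra_simps)
  then have "closed_segment (p 1) (p 2) \<inter> closed_segment (p 3) (p 0) \<noteq> {}"
    using True closed_segments_meet by blast
  then show ?thesis
    by (simp add: self_intersecting_quad_def)
next
  case False
  have "p 1 + (- k) *\<^sub>R p 0 = p 3 + (- k) *\<^sub>R p 2"
    using assms by (simp add: algebra_simps)
  then have "closed_segment (p 1) (p 0) \<inter> closed_segment (p 3) (p 2) \<noteq> {}"
    using False closed_segments_meet[of "- k"] by auto
  then show ?thesis
    by (simp add: self_intersecting_quad_def closed_segment_commute)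
qed

lemma sum_lessThan_rotate:
  assumes "n > 0"
  shows "(\<Sum>i<n. f (Suc i mod n)) = (\<Sum>i<n. f i)"
proof -
  obtain m where n: "n = Suc m"
    using assms gr0_implies_Suc by blast
  have "(\<Sum>i<Suc m. f (Suc i mod Suc m)) = (\<Sum>i<m. f (Suc i)) + f 0"
    by (simp add: sum.lessThan_Suc)
  also have "\<dots> = (\<Sum>i<Suc m. f i)"
    by (subst sum.lessThan_Suc_shift) (simp add: add.commute)
  finally show ?thesis
    by (simp add: n)
qed

lemma sum_edge_eq_0: "(\<Sum>i<n. edge n A i) = 0"
proof (cases "n = 0")
  case False
  have "(\<Sum>i<n. A (i mod n)) = (\<Sum>i<n. A i)"
    by simp
  moreover have "(\<Sum>i<n. A (Suc i mod n)) = (\<Sum>i<n. A i)"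
    using False sum_lessThan_rotate[of n A] by simp
  ultimately show ?thesis
    by (simp add: edge_def sum_subtractf)
qed simp

lemma cyclic_cross_sum_translate:
  fixes B :: "nat \<Rightarrow> real^3"
  assumes "n > 0"
  shows "(\<Sum>i<n. (B i - Z) \<times> (B (Suc i mod n) - Z)) = (\<Sum>i<n. B i \<times> B (Suc i mod n))"
proof -
  have "(B i - Z) \<times> (B (Suc i mod n) - Z) =
      B i \<times> B (Suc i mod n) + B (Suc i mod n) \<times> Z - B i \<times> Z" for i
    by (simp add: cross3_simps forall_3)
  moreover have "(\<Sum>i<n. B (Suc i mod n) \<times> Z) = (\<Sum>i<n. B i \<times> Z)"
    using sum_lessThan_rotate[OF assms, of "\<lambda>i. B i \<times> Z"] .
  ultimately show ?thesis
    by (simp add: sum.distrib sum_subtractf)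
qed

lemma oriented_area_zero_iff:
  assumes "n > 0"
  shows "oriented_area_zero n B \<longleftrightarrow> (\<Sum>i<n. B i \<times> B (Suc i mod n)) = 0"
  using cyclic_cross_sum_translate[OF assms] by (simp add: oriented_area_zero_def)

lemma support_system_oriented_area_zero:
  assumes "n > 0" "support_system n A u"
  shows "oriented_area_zero n (\<lambda>i. Z + u i)"
proof -
  have "(\<Sum>i<n. u i \<times> u (Suc i mod n)) = (\<Sum>i<n. edge n A (Suc i mod n))"
    using assms(2) by (simp add: support_system_def)
  also have "\<dots> = 0"
    using sum_lessThan_rotate[OF assms(1), of "edge n A"] sum_edge_eq_0 by simp
  finally show ?thesis
    using cyclic_cross_sum_translate[OF assms(1), of "\<lambda>i. Z + u i" Z]
    by (simp add: oriented_area_zero_iff[OF assms(1)])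
qed

context
  fixes a b c d :: "real^3"
  assumes edges_closed: "a + b + c + d = 0"
    and triple_nonzero: "a \<bullet> (b \<times> c) \<noteq> 0"
begin

lemma quad_triple_products:
  "b \<bullet> (c \<times> d) = - (a \<bullet> (b \<times> c))"
  "c \<bullet> (d \<times> a) = a \<bullet> (b \<times> c)"
  "d \<bullet> (a \<times> b) = - (a \<bullet> (b \<times> c))"
proof -
  have d: "d = - (a + b + c)"
    using edges_closed by (metis add_eq_0_iff)
  show "b \<bullet> (c \<times> d) = - (a \<bullet> (b \<times> c))" "c \<bullet> (d \<times> a) = a \<bullet> (b \<times> c)"
    "d \<bullet> (a \<times> b) = - (a \<bullet> (b \<times> c))"
    unfolding d by (simp_all add: cross3_simps forall_3)
qed

lemma quad_cross_sum: "a \<times> b + c \<times> d = b \<times> c + d \<times> a"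
proof -
  have d: "d = - (a + b + c)"
    using edges_closed by (metis add_eq_0_iff)
  show ?thesis
    unfolding d by (simp add: cross3_simps forall_3)
qed

text \<open>Each of these cross products occurs in one of the four nonvanishing triple products.\<close>

lemma quad_crosses_nonzero: "a \<times> b \<noteq> 0" "b \<times> c \<noteq> 0" "c \<times> d \<noteq> 0" "d \<times> a \<noteq> 0"
  using triple_nonzero quad_triple_products dot_cross_self by (metis inner_zero_right neg_equal_0_iff_equal)+

lemma quad_support_exists:
  "\<exists>u\<^sub>0 u\<^sub>1 u\<^sub>2 u\<^sub>3. u\<^sub>0 \<times> u\<^sub>1 = b \<and> u\<^sub>1 \<times> u\<^sub>2 = c \<and> u\<^sub>2 \<times> u\<^sub>3 = d \<and> u\<^sub>3 \<times> u\<^sub>0 = a"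
proof (intro exI conjI)
  define D where "D = a \<bullet> (b \<times> c)"
  have "D \<noteq> 0"
    using triple_nonzero by (simp add: D_def)
  show "(a \<times> b) \<times> ((1 / D) *\<^sub>R (b \<times> c)) = b"
    "((1 / D) *\<^sub>R (b \<times> c)) \<times> (- (c \<times> d)) = c"
    "(- (c \<times> d)) \<times> (- ((1 / D) *\<^sub>R (d \<times> a))) = d"
    "(- ((1 / D) *\<^sub>R (d \<times> a))) \<times> (a \<times> b) = a"
    using \<open>D \<noteq> 0\<close>
    by (simp_all add: cross_mult_left cross_mult_right cross_cross_shared quad_triple_products
        flip: D_def)
qed

lemma quad_support_diagonals_parallel:
  assumes "u\<^sub>0 \<times> u\<^sub>1 = b" "u\<^sub>1 \<times> u\<^sub>2 = c" "u\<^sub>2 \<times> u\<^sub>3 = d" "u\<^sub>3 \<times> u\<^sub>0 = a"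
  shows "\<exists>k. u\<^sub>1 - u\<^sub>3 = k *\<^sub>R (u\<^sub>0 - u\<^sub>2)"
proof -
  obtain t\<^sub>0 where t\<^sub>0: "u\<^sub>0 = t\<^sub>0 *\<^sub>R (a \<times> b)"
    using orthogonal_imp_parallel_cross[OF quad_crosses_nonzero(1), of u\<^sub>0] assms dot_cross_self
    by metis
  obtain t\<^sub>1 where t\<^sub>1: "u\<^sub>1 = t\<^sub>1 *\<^sub>R (b \<times> c)"
    using orthogonal_imp_parallel_cross[OF quad_crosses_nonzero(2), of u\<^sub>1] assms dot_cross_self
    by metis
  obtain t\<^sub>2 where t\<^sub>2: "u\<^sub>2 = t\<^sub>2 *\<^sub>R (c \<times> d)"
    using orthogonal_imp_parallel_cross[OF quad_crosses_nonzero(3), of u\<^sub>2] assms dot_cross_self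
    by metis
  obtain t\<^sub>3 where t\<^sub>3: "u\<^sub>3 = t\<^sub>3 *\<^sub>R (d \<times> a)"
    using orthogonal_imp_parallel_cross[OF quad_crosses_nonzero(4), of u\<^sub>3] assms dot_cross_self
    by metis
  have "a \<noteq> 0" "b \<noteq> 0" "c \<noteq> 0"
    using quad_crosses_nonzero by auto
  define D where "D = a \<bullet> (b \<times> c)"
  have r01: "t\<^sub>0 * t\<^sub>1 * D = 1"
    using scaled_cross_cross_eq_self[of t\<^sub>0 a b t\<^sub>1 c] assms(1) \<open>b \<noteq> 0\<close>
    by (simp add: t\<^sub>0 t\<^sub>1 D_def)
  have r12: "t\<^sub>1 * t\<^sub>2 * D = -1"
    using scaled_cross_cross_eq_self[of t\<^sub>1 b c t\<^sub>2 d] assms(2) \<open>c \<noteq> 0\<close>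
    by (simp add: t\<^sub>1 t\<^sub>2 D_def quad_triple_products)
  have r30: "t\<^sub>3 * t\<^sub>0 * D = -1"
    using scaled_cross_cross_eq_self[of t\<^sub>3 d a t\<^sub>0 b] assms(4) \<open>a \<noteq> 0\<close>
    by (simp add: t\<^sub>3 t\<^sub>0 D_def quad_triple_products)
  have "t\<^sub>1 * D * (t\<^sub>0 + t\<^sub>2) = 0"
    using r01 r12 by (simp add: algebra_simps)
  then have t\<^sub>2_eq: "t\<^sub>2 = - t\<^sub>0"
    using r01 by (auto simp: add_eq_0_iff)
  have "t\<^sub>0 * D * (t\<^sub>1 + t\<^sub>3) = 0"
    using r01 r30 by (simp add: algebra_simps)
  then have t\<^sub>3_eq: "t\<^sub>3 = - t\<^sub>1"
    using r01 by (auto simp: add_eq_0_iff)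
  have "t\<^sub>0 \<noteq> 0"
    using r01 by auto
  have "u\<^sub>1 - u\<^sub>3 = t\<^sub>1 *\<^sub>R (b \<times> c + d \<times> a)"
    by (simp add: t\<^sub>1 t\<^sub>3 t\<^sub>3_eq scaleR_add_right)
  also have "\<dots> = t\<^sub>1 *\<^sub>R (a \<times> b + c \<times> d)"
    by (simp add: quad_cross_sum)
  also have "\<dots> = (t\<^sub>1 / t\<^sub>0) *\<^sub>R (u\<^sub>0 - u\<^sub>2)"
    using \<open>t\<^sub>0 \<noteq> 0\<close> by (simp add: t\<^sub>0 t\<^sub>2 t\<^sub>2_eq scaleR_add_right)
  finally have "u\<^sub>1 - u\<^sub>3 = (t\<^sub>1 / t\<^sub>0) *\<^sub>R (u\<^sub>0 - u\<^sub>2)" .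
  then show ?thesis ..
qed

end

lemma generic_quadrangle_triple_nonzero:
  assumes "generic_polygon 4 A"
  shows "edge 4 A 0 \<bullet> (edge 4 A 1 \<times> edge 4 A 2) \<noteq> 0"
proof
  have "\<not> collinear {0, edge 4 A 0, edge 4 A 1}" "\<not> coplanar {0, edge 4 A 0, edge 4 A 1, edge 4 A 2}"
    using assms[unfolded generic_polygon_def, rule_format, of 0] by (simp_all add: numeral_2_eq_2)
  then have "edge 4 A 0 \<times> edge 4 A 1 \<noteq> 0" "\<not> coplanar {0, edge 4 A 0, edge 4 A 1, edge 4 A 2}"
    by (simp_all add: cross_eq_0)
  moreover assume "edge 4 A 0 \<bullet> (edge 4 A 1 \<times> edge 4 A 2) = 0"
  then have "edge 4 A 2 \<bullet> (edge 4 A 0 \<times> edge 4 A 1) = 0"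
    by (simp add: cross3_simps forall_3)
  ultimately show False
    using orthogonal_cross_imp_coplanar by blast
qed

lemma all_less_4: "(\<forall>i<4::nat. P i) \<longleftrightarrow> P 0 \<and> P 1 \<and> P 2 \<and> P 3"
  by (simp add: eval_nat_numeral All_less_Suc conj_ac)

lemma mod_4_Suc: "Suc 0 mod 4 = 1" "Suc 1 mod 4 = 2" "Suc 2 mod 4 = 3" "Suc 3 mod 4 = (0::nat)"
  by simp_all

lemma support_system_4_iff:
  "support_system 4 A u \<longleftrightarrow>
    u 0 \<times> u 1 = edge 4 A 1 \<and> u 1 \<times> u 2 = edge 4 A 2 \<and>
    u 2 \<times> u 3 = edge 4 A 3 \<and> u 3 \<times> u 0 = edge 4 A 0"
  unfolding support_system_def all_less_4 mod_4_Suc ..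

theorem theorem3p1:
  fixes A :: "nat \<Rightarrow> real^3"
  assumes "generic_polygon 4 A"
  shows "regular_polygon 4 A \<and>
    (\<forall>u Z. support_system 4 A u \<longrightarrow>
       (let B = (\<lambda>i. Z + u i) in
          coplanar {B 0, B 1, B 2, B 3} \<and> oriented_area_zero 4 B \<and> self_intersecting_quad B))"
proof -
  have closed: "edge 4 A 0 + edge 4 A 1 + edge 4 A 2 + edge 4 A 3 = 0"
    using sum_edge_eq_0[of 4 A] by (simp add: numeral_eq_Suc add.commute add.left_commute)
  note nondeg = generic_quadrangle_triple_nonzero[OF assms]
  obtain u\<^sub>0 u\<^sub>1 u\<^sub>2 u\<^sub>3 where "u\<^sub>0 \<times> u\<^sub>1 = edge 4 A 1" "u\<^sub>1 \<times> u\<^sub>2 = edge 4 A 2"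
    "u\<^sub>2 \<times> u\<^sub>3 = edge 4 A 3" "u\<^sub>3 \<times> u\<^sub>0 = edge 4 A 0"
    using quad_support_exists[OF closed nondeg] by blast
  then have "support_system 4 A (\<lambda>i. [u\<^sub>0, u\<^sub>1, u\<^sub>2, u\<^sub>3] ! i)"
    unfolding support_system_4_iff by (simp add: numeral_2_eq_2 numeral_3_eq_3)
  with assms have "regular_polygon 4 A"
    unfolding regular_polygon_def by blast
  moreover have "coplanar {Z + u 0, Z + u 1, Z + u 2, Z + u 3} \<and>
      oriented_area_zero 4 (\<lambda>i. Z + u i) \<and> self_intersecting_quad (\<lambda>i. Z + u i)"
    if su: "support_system 4 A u" for u Z
  proof -
    obtain k where "u 1 - u 3 = k *\<^sub>R (u 0 - u 2)"
      using quad_support_diagonals_parallel[OF closed nondeg, of "u 0" "u 1" "u 2" "u 3"] su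
      unfolding support_system_4_iff by blast
    then have "(Z + u 1) - (Z + u 3) = k *\<^sub>R ((Z + u 0) - (Z + u 2))"
      by simp
    then show ?thesis
      using parallel_diagonals_coplanar[of "\<lambda>i. Z + u i" k]
        parallel_diagonals_self_intersecting[of "\<lambda>i. Z + u i" k]
        support_system_oriented_area_zero[of 4 A u Z] su
      by simp
  qed
  ultimately show ?thesis
    by (simp add: Let_def)
qed

end
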